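(* Let $t\ge 3$ and $d\ge 0$ be integers. Every graph $G$ with $\mathrm{tww}(G)\le d$ that contains no clique on $t$ vertices admits a proper vertex coloring with at most $(d+2)^{t-2}$ colors. In particular, every class of graphs of bounded twin-width is $\chi$-bounded.
   Context: A class $\mathcal C$ of graphs is $\chi$-bounded if there is a function $f$ with $\chi(G)\le f(\omega(G))$ for all $G\in\mathcal C$, where $\chi$ is the chromatic number and $\omega$ the clique number. A trigraph $H$ consists of a vertex set $V(H)$ and two disjoint sets of unordered pairs of distinct vertices: black edges $E(H)$ and red edges $R(H)$. Two vertices are adjacent (neighbors) if they are joined by a black or a red edge. The red graph of $H$ is the graph $(V(H),R(H))$; $H$ is a $d$-trigraph if its red graph has maximum degree at most $d$. A graph is a trigraph with no red edges. Contracting two distinct vertices $u,v$ of a trigraph $H$ yields the trigraph obtained by deleting $u$ and $v$ and adding a new vertex $z$ such that, for every other vertex $x$: $zx$ is a black edge if both $ux$ and $vx$ are black edges; $zx$ is not an edge if $x$ is adjacent to neither $u$ nor $v$; and $zx$ is a red edge otherwise. All edges not incident to $u$ or $v$ are unchanged. A $d$-sequence of an $n$-vertex graph $G$ is a sequence of $d$-trigraphs $G=G_n,G_{n-1},\dots,G_1$ such that $G_1$ has a single vertex and each $G_{i-1}$ is obtained from $G_i$ by one contraction (so $G_i$ has $i$ vertices). The twin-width $\mathrm{tww}(G)$ of $G$ is the minimum $d$ such that $G$ admits a $d$-sequence. *)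

theory Defs
  imports Main
begin

definition simple_graph :: "'a set \<Rightarrow> 'a set set \<Rightarrow> bool" where
  "simple_graph V E \<longleftrightarrow> finite V \<and>
     (\<forall>e\<in>E. \<exists>x y. x \<in> V \<and> y \<in> V \<and> x \<noteq> y \<and> e = {x, y})"

record 'a trigraph =
  tverts :: "'a set"
  blk :: "'a set set"
  red :: "'a set set"

definition tadj :: "'a trigraph \<Rightarrow> 'a \<Rightarrow> 'a \<Rightarrow> bool" where
  "tadj H x y \<longleftrightarrow> {x, y} \<in> blk H \<or> {x, y} \<in> red H"

definition d_trigraph :: "nat \<Rightarrow> 'a trigraph \<Rightarrow> bool" where
  "d_trigraph d H \<longleftrightarrow> (\<forall>x\<in>tverts H. card {y \<in> tverts H. y \<noteq> x \<and> {x, y} \<in> red H} \<le> d)"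

text \<open>Contract distinct vertices u, v into a new vertex z (z must not clash with
  the remaining vertices; it may reuse the name of u or v).\<close>
definition contract :: "'a trigraph \<Rightarrow> 'a \<Rightarrow> 'a \<Rightarrow> 'a \<Rightarrow> 'a trigraph" where
  "contract H u v z =
     \<lparr> tverts = (tverts H - {u, v}) \<union> {z},
       blk = {e \<in> blk H. u \<notin> e \<and> v \<notin> e}
             \<union> {{z, x} | x. x \<in> tverts H - {u, v} \<and> {u, x} \<in> blk H \<and> {v, x} \<in> blk H},
       red = {e \<in> red H. u \<notin> e \<and> v \<notin> e}
             \<union> {{z, x} | x. x \<in> tverts H - {u, v} \<and> (tadj H u x \<or> tadj H v x)
                          \<and> \<not> ({u, x} \<in> blk H \<and> {v, x} \<in> blk H)} \<rparr>"

definition contraction_step :: "'a trigraph \<Rightarrow> 'a trigraph \<Rightarrow> bool" where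
  "contraction_step H H' \<longleftrightarrow>
     (\<exists>u v z. u \<in> tverts H \<and> v \<in> tverts H \<and> u \<noteq> v \<and> z \<notin> tverts H - {u, v}
              \<and> H' = contract H u v z)"

definition graph_trigraph :: "'a set \<Rightarrow> 'a set set \<Rightarrow> 'a trigraph" where
  "graph_trigraph V E = \<lparr> tverts = V, blk = E, red = {} \<rparr>"

text \<open>A d-sequence G = G_n, ..., G_1, stored as the list [G_n, ..., G_1].\<close>
definition d_sequence :: "'a set \<Rightarrow> 'a set set \<Rightarrow> nat \<Rightarrow> 'a trigraph list \<Rightarrow> bool" where
  "d_sequence V E d Hs \<longleftrightarrow>
     Hs \<noteq> [] \<and> length Hs = card V \<and> hd Hs = graph_trigraph V E
     \<and> card (tverts (last Hs)) = 1
     \<and> (\<forall>H\<in>set Hs. d_trigraph d H)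
     \<and> (\<forall>i. Suc i < length Hs \<longrightarrow> contraction_step (Hs ! i) (Hs ! Suc i))"

definition twin_width :: "'a set \<Rightarrow> 'a set set \<Rightarrow> nat" where
  "twin_width V E = (LEAST d. \<exists>Hs. d_sequence V E d Hs)"

definition is_clique :: "'a set set \<Rightarrow> 'a set \<Rightarrow> bool" where
  "is_clique E K \<longleftrightarrow> (\<forall>x\<in>K. \<forall>y\<in>K. x \<noteq> y \<longrightarrow> {x, y} \<in> E)"

definition proper_coloring :: "'a set \<Rightarrow> 'a set set \<Rightarrow> nat \<Rightarrow> ('a \<Rightarrow> nat) \<Rightarrow> bool" where
  "proper_coloring V E k c \<longleftrightarrow> (\<forall>x\<in>V. c x < k) \<and>
     (\<forall>x\<in>V. \<forall>y\<in>V. x \<noteq> y \<longrightarrow> {x, y} \<in> E \<longrightarrow> c x \<noteq> c y)"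

end

theory Submission
  imports Defs
begin

text \<open>Induct on t. Fix a d-sequence and a vertex set X. For x in X let j be the last time at which
  the part of x has a black edge to the part of another vertex of X, and let the bag of x consist
  of the vertices of X in the part of x at time j (just x if there is no such time). A black edge
  means complete adjacency in G, so each bag is complete to a vertex of X outside it, has no clique
  on t - 1 vertices and is (d+2)^(t-3)-colourable by induction. A bag with a neighbouring bag of
  time at least j sees it, at time j + 1, in its own part or in a red neighbour of it (a black edge
  would contradict the choice of j); the neighbouring bag is determined by its part at time j, and
  as contracting merges only two parts, there are at most d + 1 such bags. Greedy colouring in
  order of decreasing time colours the bags with d + 2 colours, and the product of both colourings
  is proper.\<close>

lemma contract_simps:
  "tverts (contract H u v z) = (tverts H - {u, v}) \<union> {z}"
  "blk (contract H u v z) = {e \<in> blk H. u \<notin> e \<and> v \<notin> e}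
     \<union> {{z, x} | x. x \<in> tverts H - {u, v} \<and> {u, x} \<in> blk H \<and> {v, x} \<in> blk H}"
  "red (contract H u v z) = {e \<in> red H. u \<notin> e \<and> v \<notin> e}
     \<union> {{z, x} | x. x \<in> tverts H - {u, v} \<and> (tadj H u x \<or> tadj H v x)
                  \<and> \<not> ({u, x} \<in> blk H \<and> {v, x} \<in> blk H)}"
  by (simp_all add: contract_def)

lemma simple_graph_edge_distinct: "simple_graph V E \<Longrightarrow> {x, y} \<in> E \<Longrightarrow> x \<noteq> y"
  unfolding simple_graph_def by (auto simp: doubleton_eq_iff)

definition wf_trigraph :: "'a trigraph \<Rightarrow> bool" where
  "wf_trigraph H \<longleftrightarrow> finite (tverts H) \<and>
     (\<forall>e \<in> blk H \<union> red H. \<exists>a b. a \<in> tverts H \<and> b \<in> tverts H \<and> a \<noteq> b \<and> e = {a, b})"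

definition admissible_contraction :: "'a trigraph \<Rightarrow> 'a \<Rightarrow> 'a \<Rightarrow> 'a \<Rightarrow> bool" where
  "admissible_contraction H u v z \<longleftrightarrow>
     u \<in> tverts H \<and> v \<in> tverts H \<and> u \<noteq> v \<and> z \<notin> tverts H - {u, v}"

definition contract_vertex :: "'a \<Rightarrow> 'a \<Rightarrow> 'a \<Rightarrow> 'a \<Rightarrow> 'a" where
  "contract_vertex u v z a = (if a = u \<or> a = v then z else a)"

lemma wf_trigraph_edge_tverts:
  assumes "wf_trigraph H" "{x, y} \<in> blk H \<union> red H"
  shows "x \<in> tverts H" "y \<in> tverts H"
proof -
  obtain a b where "a \<in> tverts H" "b \<in> tverts H" "{x, y} = {a, b}"
    using assms unfolding wf_trigraph_def by blast
  then show "x \<in> tverts H" "y \<in> tverts H" by (auto simp: doubleton_eq_iff)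
qed

lemma contraction_step_iff:
  "contraction_step H H' \<longleftrightarrow> (\<exists>u v z. admissible_contraction H u v z \<and> H' = contract H u v z)"
  unfolding contraction_step_def admissible_contraction_def by blast

lemma wf_trigraph_graph_trigraph: "simple_graph V E \<Longrightarrow> wf_trigraph (graph_trigraph V E)"
  unfolding simple_graph_def wf_trigraph_def graph_trigraph_def by auto

lemma wf_trigraph_contract:
  assumes "wf_trigraph H" "admissible_contraction H u v z"
  shows "wf_trigraph (contract H u v z)"
  unfolding wf_trigraph_def
proof (intro conjI ballI)
  show "finite (tverts (contract H u v z))"
    using assms(1) by (simp add: contract_simps wf_trigraph_def)
next
  fix e assume "e \<in> blk (contract H u v z) \<union> red (contract H u v z)"
  then consider
      (old) a b where "a \<in> tverts H" "b \<in> tverts H" "a \<noteq> b" "e = {a, b}" "u \<notin> e" "v \<notin> e"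
    | (new) x where "x \<in> tverts H - {u, v}" "e = {z, x}"
    using assms(1) unfolding wf_trigraph_def contract_simps by blast
  then show "\<exists>a b. a \<in> tverts (contract H u v z) \<and> b \<in> tverts (contract H u v z) \<and> a \<noteq> b \<and> e = {a, b}"
    using assms(2) by cases (auto simp: contract_simps admissible_contraction_def)
qed

lemma contract_vertex_in_tverts:
  "a \<in> tverts H \<Longrightarrow> contract_vertex u v z a \<in> tverts (contract H u v z)"
  by (auto simp: contract_simps contract_vertex_def)

lemma contract_vertex_eq_self:
  "admissible_contraction H u v z \<Longrightarrow> b \<in> tverts H - {u, v} \<Longrightarrow> contract_vertex u v z a = b \<Longrightarrow> a = b"
  by (auto simp: admissible_contraction_def contract_vertex_def split: if_splits)

lemma contract_blk_reflect:
  assumes wf: "wf_trigraph H" and adm: "admissible_contraction H u v z"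
    and ab: "a \<in> tverts H" "b \<in> tverts H"
    and ne: "contract_vertex u v z a \<noteq> contract_vertex u v z b"
    and e: "{contract_vertex u v z a, contract_vertex u v z b} \<in> blk (contract H u v z)"
  shows "{a, b} \<in> blk H"
proof -
  let ?a = "contract_vertex u v z a" and ?b = "contract_vertex u v z b"
  from e consider
      (old) "{?a, ?b} \<in> blk H" "u \<notin> {?a, ?b}" "v \<notin> {?a, ?b}"
    | (new) w where "w \<in> tverts H - {u, v}" "{?a, ?b} = {z, w}" "{u, w} \<in> blk H" "{v, w} \<in> blk H"
    by (auto simp: contract_simps)
  then show ?thesis
  proof cases
    case old
    then have "?a \<in> tverts H - {u, v}" "?b \<in> tverts H - {u, v}"
      using wf_trigraph_edge_tverts[OF wf] by auto
    then have "a = ?a" "b = ?b"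
      using contract_vertex_eq_self[OF adm _ refl] by blast+
    then show ?thesis using old(1) by simp
  next
    case new
    have merged: "x \<in> {u, v}" if "x \<in> tverts H" "contract_vertex u v z x = z" for x
      using that adm by (auto simp: admissible_contraction_def contract_vertex_def split: if_splits)
    from new(2) consider "?a = z" "?b = w" | "?a = w" "?b = z"
      by (auto simp: doubleton_eq_iff)
    then show ?thesis
    proof cases
      case 1
      then have "a \<in> {u, v}" "b = w"
        using merged ab contract_vertex_eq_self[OF adm new(1)] by blast+
      then show ?thesis using new(3,4) by auto
    next
      case 2
      then have "b \<in> {u, v}" "a = w"
        using merged ab contract_vertex_eq_self[OF adm new(1)] by blast+
      then show ?thesis using new(3,4) by (auto simp: insert_commute)
    qed
  qed
qed

lemma contract_tadj:
  assumes adm: "admissible_contraction H u v z" and ab: "a \<in> tverts H" "b \<in> tverts H"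
    and ne: "contract_vertex u v z a \<noteq> contract_vertex u v z b" and adj: "tadj H a b"
  shows "tadj (contract H u v z) (contract_vertex u v z a) (contract_vertex u v z b)"
proof -
  have sym: "tadj G x y \<longleftrightarrow> tadj G y x" for G :: "'a trigraph" and x y
    by (simp add: tadj_def insert_commute)
  have *: "tadj (contract H u v z) z b"
    if "a \<in> {u, v}" "b \<in> tverts H - {u, v}" "tadj H a b" for a b
    using that adm by (auto simp: tadj_def contract_simps admissible_contraction_def)
  consider "a \<notin> {u, v}" "b \<notin> {u, v}" | "a \<in> {u, v}" "b \<notin> {u, v}" | "a \<notin> {u, v}" "b \<in> {u, v}"
    using ne by (auto simp: contract_vertex_def split: if_splits)
  then show ?thesis
  proof cases
    case 1
    then show ?thesis using adj ab by (auto simp: tadj_def contract_simps contract_vertex_def)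
  next
    case 2
    then show ?thesis using *[of a b] adj ab by (simp add: contract_vertex_def)
  next
    case 3
    then show ?thesis using *[of b a] adj ab sym by (simp add: contract_vertex_def)
  qed
qed

text \<open>Only u and v have a common image, so at most one preimage more than \<open>card R\<close> arises.\<close>
lemma card_contract_preimage:
  assumes adm: "admissible_contraction H u v z" and r: "r \<in> tverts H"
    and R: "finite R" "contract_vertex u v z r \<notin> R"
  shows "card {a \<in> tverts H. a \<noteq> r \<and> contract_vertex u v z a \<in> R \<union> {contract_vertex u v z r}}
           \<le> card R + 1"
    (is "card ?P \<le> _")
proof -
  have uv: "u \<noteq> v" and z: "z \<notin> tverts H - {u, v}"
    using adm by (auto simp: admissible_contraction_def)
  have fixed: "a \<in> tverts H - {u, v} \<Longrightarrow> contract_vertex u v z a = a \<and> a \<noteq> z" for a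
    using z by (auto simp: contract_vertex_def)
  show ?thesis
  proof (cases "r \<in> {u, v}")
    case True
    then have "?P \<subseteq> ({u, v} - {r}) \<union> R"
      using fixed by (auto simp: contract_vertex_def)
    then have "card ?P \<le> card (({u, v} - {r}) \<union> R)" using R by (intro card_mono) auto
    also have "\<dots> \<le> card ({u, v} - {r}) + card R" by (rule card_Un_le)
    also have "card ({u, v} - {r}) = 1" using True uv by auto
    finally show ?thesis by simp
  next
    case r_old: False
    then have r_fixed: "contract_vertex u v z r = r" "r \<noteq> z"
      using fixed r by auto
    show ?thesis
    proof (cases "z \<in> R")
      case False
      then have "?P \<subseteq> R" using r_fixed by (auto simp: contract_vertex_def)
      then show ?thesis using R by (simp add: card_mono le_Suc_eq)
    next
      case True
      have "?P \<subseteq> {u, v} \<union> (R - {z})" using fixed r_fixed by auto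
      then have "card ?P \<le> card ({u, v} \<union> (R - {z}))" using R by (intro card_mono) auto
      also have "\<dots> \<le> card {u, v} + card (R - {z})" by (rule card_Un_le)
      also have "card (R - {z}) = card R - 1" using True by (rule card_Diff_singleton)
      moreover have "card R > 0" using True R card_gt_0_iff by blast
      ultimately show ?thesis using uv by simp
    qed
  qed
qed

lemma card_red_neighbours_le:
  assumes "wf_trigraph H" "d_trigraph d H"
  shows "card {y \<in> tverts H. y \<noteq> p \<and> {p, y} \<in> red H} \<le> d"
proof (cases "p \<in> tverts H")
  case True
  then show ?thesis using assms(2) unfolding d_trigraph_def by blast
next
  case False
  then have "{p, y} \<notin> red H" for y
    using wf_trigraph_edge_tverts[OF assms(1)] by blast
  then show ?thesis by simp
qed

lemma ex_le_notin_card: "finite C \<Longrightarrow> card C \<le> k \<Longrightarrow> \<exists>c \<le> k. (c :: nat) \<notin> C"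
  by (metis atLeastAtMost_iff card_atLeastAtMost card_mono diff_zero finite_atLeastAtMost
      not_less_eq_eq subsetI zero_le)

lemma proper_fun_upd:
  assumes sym: "\<And>A B. adj A B \<Longrightarrow> adj B A" and irrefl: "\<And>A. \<not> adj A A"
    and proper: "\<forall>A\<in>N - {a}. \<forall>B\<in>N - {a}. adj A B \<longrightarrow> g A \<noteq> g B"
    and fresh: "c \<notin> g ` {B \<in> N - {a}. adj a B}"
  shows "\<forall>A\<in>N. \<forall>B\<in>N. adj A B \<longrightarrow> (g(a := c)) A \<noteq> (g(a := c)) B"
proof (intro ballI impI)
  fix A B assume AB: "A \<in> N" "B \<in> N" "adj A B"
  have "A \<noteq> B" using AB(3) irrefl by blast
  consider "A = a" | "B = a" | "A \<in> N - {a}" "B \<in> N - {a}" using AB(1,2) by blast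
  then show "(g(a := c)) A \<noteq> (g(a := c)) B"
  proof cases
    case 1
    then show ?thesis using fresh AB \<open>A \<noteq> B\<close> by auto
  next
    case 2
    then show ?thesis using fresh AB \<open>A \<noteq> B\<close> sym by auto
  next
    case 3
    then show ?thesis using proper AB(3) by auto
  qed
qed

lemma greedy_coloring_by_rank:
  fixes N :: "'b set" and adj :: "'b \<Rightarrow> 'b \<Rightarrow> bool" and r :: "'b \<Rightarrow> nat"
  assumes "finite N" and sym: "\<And>A B. adj A B \<Longrightarrow> adj B A" and irrefl: "\<And>A. \<not> adj A A"
    and later: "\<And>A. A \<in> N \<Longrightarrow> card {B \<in> N. adj A B \<and> r A \<le> r B} \<le> k"
  obtains g where "\<forall>A\<in>N. g A \<le> k" "\<forall>A\<in>N. \<forall>B\<in>N. adj A B \<longrightarrow> g A \<noteq> g B"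
proof -
  have "\<exists>g. (\<forall>A\<in>N. g A \<le> k) \<and> (\<forall>A\<in>N. \<forall>B\<in>N. adj A B \<longrightarrow> g A \<noteq> g B)"
    using assms(1) later
  proof (induction N rule: finite_psubset_induct)
    case (psubset N)
    show ?case
    proof (cases "N = {}")
      case True
      then show ?thesis by simp
    next
      case False
      text \<open>Colour a vertex of minimum rank last: all its neighbours count as later ones.\<close>
      have "Min (r ` N) \<in> r ` N" using False psubset.hyps(1) by simp
      then obtain a where a: "a \<in> N" "r a = Min (r ` N)" by (metis imageE)
      have minimal: "B \<in> N \<Longrightarrow> r a \<le> r B" for B
        using a psubset.hyps(1) by simp
      have "card {B \<in> N - {a}. adj A B \<and> r A \<le> r B} \<le> card {B \<in> N. adj A B \<and> r A \<le> r B}" for A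
        using psubset.hyps(1) by (intro card_mono) auto
      then have "card {B \<in> N - {a}. adj A B \<and> r A \<le> r B} \<le> k" if "A \<in> N - {a}" for A
        using psubset.prems[of A] that by (meson DiffD1 le_trans)
      then obtain g where g_le: "\<forall>A\<in>N - {a}. g A \<le> k"
        and g_proper: "\<forall>A\<in>N - {a}. \<forall>B\<in>N - {a}. adj A B \<longrightarrow> g A \<noteq> g B"
        using psubset.IH[of "N - {a}"] a(1) by blast
      have "card (g ` {B \<in> N - {a}. adj a B}) \<le> card {B \<in> N. adj a B \<and> r a \<le> r B}"
        using psubset.hyps(1) minimal
        by (intro card_image_le[THEN order_trans] card_mono) auto
      also have "\<dots> \<le> k" using psubset.prems a(1) by blast
      finally have "card (g ` {B \<in> N - {a}. adj a B}) \<le> k" .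
      moreover have "finite (g ` {B \<in> N - {a}. adj a B})" using psubset.hyps(1) by simp
      ultimately obtain c where "c \<le> k" "c \<notin> g ` {B \<in> N - {a}. adj a B}"
        using ex_le_notin_card by blast
      then show ?thesis
        using g_le proper_fun_upd[OF sym irrefl g_proper] by (intro exI[of _ "g(a := c)"]) auto
    qed
  qed
  then show ?thesis using that by blast
qed

lemma proper_coloring_by_classes:
  fixes P :: "'a \<Rightarrow> 'a set" and f :: "'a set \<Rightarrow> 'a \<Rightarrow> nat" and g :: "'a set \<Rightarrow> nat"
  assumes self: "\<And>x. x \<in> X \<Longrightarrow> x \<in> P x"
    and inner: "\<And>x. x \<in> X \<Longrightarrow> proper_coloring (P x) E k (f (P x))"
    and outer_bound: "\<And>x. x \<in> X \<Longrightarrow> g (P x) < m"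
    and outer: "\<And>x y. x \<in> X \<Longrightarrow> y \<in> X \<Longrightarrow> P x \<noteq> P y \<Longrightarrow> {x, y} \<in> E \<Longrightarrow> g (P x) \<noteq> g (P y)"
  shows "proper_coloring X E (m * k) (\<lambda>x. g (P x) * k + f (P x) x)"
  unfolding proper_coloring_def
proof (intro conjI ballI impI)
  have inner_lt: "f (P x) x < k" if "x \<in> X" for x
    using inner[OF that] self[OF that] unfolding proper_coloring_def by blast
  fix x assume x: "x \<in> X"
  have "g (P x) * k + f (P x) x < (g (P x) + 1) * k" using inner_lt[OF x] by simp
  also have "\<dots> \<le> m * k" using outer_bound[OF x] by (intro mult_right_mono) auto
  finally show "g (P x) * k + f (P x) x < m * k" .
  fix y assume y: "y \<in> X" and xy: "x \<noteq> y" "{x, y} \<in> E"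
  show "g (P x) * k + f (P x) x \<noteq> g (P y) * k + f (P y) y"
  proof (cases "P x = P y")
    case True
    then have "f (P x) x \<noteq> f (P x) y"
      using inner[OF x] self x y xy unfolding proper_coloring_def by metis
    then show ?thesis using True by simp
  next
    case False
    have "(g (P z) * k + f (P z) z) div k = g (P z)" if "z \<in> X" for z
      using inner_lt[OF that] by simp
    then show ?thesis using outer[OF x y False xy(2)] x y by metis
  qed
qed

locale contraction_sequence =
  fixes V :: "'a set" and E :: "'a set set" and d :: nat and Hs :: "'a trigraph list"
  assumes simple: "simple_graph V E" and d_seq: "d_sequence V E d Hs"
begin

abbreviation H :: "nat \<Rightarrow> 'a trigraph" where "H j \<equiv> Hs ! j"

definition contraction_triple :: "nat \<Rightarrow> 'a \<times> 'a \<times> 'a" where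
  "contraction_triple j = (SOME (u, v, z). admissible_contraction (H j) u v z
                                         \<and> H (Suc j) = contract (H j) u v z)"

text \<open>\<open>merge j\<close> sends each vertex of \<open>H j\<close> to the vertex of \<open>H (Suc j)\<close> it becomes, and
  \<open>part j x\<close> is the vertex of \<open>H j\<close> whose part contains the original vertex x.\<close>
definition merge :: "nat \<Rightarrow> 'a \<Rightarrow> 'a" where
  "merge j = (case contraction_triple j of (u, v, z) \<Rightarrow> contract_vertex u v z)"

primrec part :: "nat \<Rightarrow> 'a \<Rightarrow> 'a" where
  "part 0 x = x"
| "part (Suc j) x = merge j (part j x)"

lemma contraction_tripleE:
  assumes "Suc j < length Hs"
  obtains u v z where "admissible_contraction (H j) u v z" "H (Suc j) = contract (H j) u v z"
    "merge j = contract_vertex u v z"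
proof -
  have "contraction_step (H j) (H (Suc j))"
    using d_seq assms unfolding d_sequence_def by blast
  then have "\<exists>t. (\<lambda>(u, v, z). admissible_contraction (H j) u v z \<and> H (Suc j) = contract (H j) u v z) t"
    unfolding contraction_step_iff by auto
  then have "case contraction_triple j of (u, v, z) \<Rightarrow>
               admissible_contraction (H j) u v z \<and> H (Suc j) = contract (H j) u v z"
    unfolding contraction_triple_def by (rule someI_ex)
  then show ?thesis
    using that unfolding merge_def by (cases "contraction_triple j") auto
qed

lemma length_pos: "0 < length Hs"
  using d_seq unfolding d_sequence_def by blast

lemma H_0: "H 0 = graph_trigraph V E"
  using d_seq unfolding d_sequence_def by (cases Hs) auto

lemma wf_H: "j < length Hs \<Longrightarrow> wf_trigraph (H j)"
proof (induction j)
  case 0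
  then show ?case using simple by (simp add: H_0 wf_trigraph_graph_trigraph)
next
  case (Suc j)
  then obtain u v z where "admissible_contraction (H j) u v z" "H (Suc j) = contract (H j) u v z"
    by (auto elim: contraction_tripleE)
  then show ?case using Suc by (simp add: wf_trigraph_contract)
qed

lemma part_in_tverts: "x \<in> V \<Longrightarrow> j < length Hs \<Longrightarrow> part j x \<in> tverts (H j)"
proof (induction j)
  case 0
  then show ?case by (simp add: H_0 graph_trigraph_def)
next
  case (Suc j)
  then obtain u v z where "H (Suc j) = contract (H j) u v z" "merge j = contract_vertex u v z"
    by (auto elim: contraction_tripleE)
  then show ?case using Suc by (simp add: contract_vertex_in_tverts)
qed

lemma part_eq_mono: "part j x = part j y \<Longrightarrow> j \<le> k \<Longrightarrow> part k x = part k y"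
  by (induction k) (auto simp: le_Suc_eq)

lemma part_last_eq:
  assumes "x \<in> V" "y \<in> V"
  shows "part (length Hs - 1) x = part (length Hs - 1) y"
proof -
  have "card (tverts (H (length Hs - 1))) = 1"
    using d_seq unfolding d_sequence_def by (metis last_conv_nth)
  then obtain w where "tverts (H (length Hs - 1)) = {w}"
    using card_1_singletonE by blast
  then show ?thesis
    using part_in_tverts[of _ "length Hs - 1"] assms length_pos by (metis diff_less singletonD zero_less_one)
qed

lemma edge_if_blk_parts:
  "j < length Hs \<Longrightarrow> x \<in> V \<Longrightarrow> y \<in> V \<Longrightarrow> part j x \<noteq> part j y
   \<Longrightarrow> {part j x, part j y} \<in> blk (H j) \<Longrightarrow> {x, y} \<in> E"
proof (induction j)
  case 0
  then show ?case by (simp add: H_0 graph_trigraph_def)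
next
  case (Suc j)
  obtain u v z where adm: "admissible_contraction (H j) u v z"
    and H: "H (Suc j) = contract (H j) u v z" and m: "merge j = contract_vertex u v z"
    using Suc.prems(1) by (auto elim: contraction_tripleE)
  have "{part j x, part j y} \<in> blk (H j)"
    using contract_blk_reflect[OF wf_H adm part_in_tverts part_in_tverts] Suc.prems H m by simp
  moreover have "part j x \<noteq> part j y" using Suc.prems(4) by auto
  ultimately show ?case using Suc by simp
qed

lemma tadj_parts_if_edge:
  "j < length Hs \<Longrightarrow> x \<in> V \<Longrightarrow> y \<in> V \<Longrightarrow> {x, y} \<in> E \<Longrightarrow> part j x \<noteq> part j y
   \<Longrightarrow> tadj (H j) (part j x) (part j y)"
proof (induction j)
  case 0
  then show ?case by (simp add: H_0 graph_trigraph_def tadj_def)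
next
  case (Suc j)
  obtain u v z where adm: "admissible_contraction (H j) u v z"
    and H: "H (Suc j) = contract (H j) u v z" and m: "merge j = contract_vertex u v z"
    using Suc.prems(1) by (auto elim: contraction_tripleE)
  have "part j x \<noteq> part j y" using Suc.prems(5) by auto
  moreover have "j < length Hs" using Suc.prems(1) by simp
  ultimately have "tadj (H j) (part j x) (part j y)"
    using Suc.IH Suc.prems(2-4) by blast
  from contract_tadj[OF adm part_in_tverts part_in_tverts _ this]
  show ?case
    using \<open>j < length Hs\<close> Suc.prems H m by simp
qed

definition red_neighbours :: "nat \<Rightarrow> 'a \<Rightarrow> 'a set" where
  "red_neighbours j p = {y \<in> tverts (H j). y \<noteq> p \<and> {p, y} \<in> red (H j)}"

lemma finite_red_neighbours: "j < length Hs \<Longrightarrow> finite (red_neighbours j p)"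
  using wf_H unfolding red_neighbours_def wf_trigraph_def by simp

lemma card_red_neighbours:
  assumes "j < length Hs"
  shows "card (red_neighbours j p) \<le> d"
proof -
  have "d_trigraph d (H j)"
    using d_seq assms unfolding d_sequence_def by simp
  then show ?thesis
    unfolding red_neighbours_def by (rule card_red_neighbours_le[OF wf_H[OF assms]])
qed

lemma card_preimage_red_neighbours:
  assumes "Suc j < length Hs" "r \<in> tverts (H j)"
  shows "card {a \<in> tverts (H j). a \<noteq> r \<and>
      merge j a \<in> red_neighbours (Suc j) (merge j r) \<union> {merge j r}} \<le> d + 1"
proof -
  obtain u v z where adm: "admissible_contraction (H j) u v z"
    and m: "merge j = contract_vertex u v z"
    using assms(1) by (auto elim: contraction_tripleE)
  have "finite (red_neighbours (Suc j) (merge j r))" using finite_red_neighbours assms(1) .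
  moreover have "merge j r \<notin> red_neighbours (Suc j) (merge j r)"
    by (simp add: red_neighbours_def)
  ultimately have "card {a \<in> tverts (H j). a \<noteq> r \<and>
      merge j a \<in> red_neighbours (Suc j) (merge j r) \<union> {merge j r}}
      \<le> card (red_neighbours (Suc j) (merge j r)) + 1"
    using card_contract_preimage[OF adm assms(2)] m by simp
  also have "\<dots> \<le> d + 1" using card_red_neighbours[OF assms(1)] by simp
  finally show ?thesis .
qed

end

locale contraction_sequence_subset = contraction_sequence +
  fixes X :: "'a set"
  assumes X_subset: "X \<subseteq> V"
begin

definition black_at :: "nat \<Rightarrow> 'a \<Rightarrow> bool" where
  "black_at j x \<longleftrightarrow> j < length Hs \<and>
     (\<exists>y\<in>X. part j y \<noteq> part j x \<and> {part j x, part j y} \<in> blk (H j))"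

definition has_black :: "'a \<Rightarrow> bool" where
  "has_black x \<longleftrightarrow> (\<exists>j. black_at j x)"

text \<open>Only meaningful when \<open>has_black x\<close>; otherwise it is \<open>Max {}\<close>.\<close>
definition last_black :: "'a \<Rightarrow> nat" where
  "last_black x = Max {j. black_at j x}"

definition bag :: "'a \<Rightarrow> 'a set" where
  "bag x = (if has_black x then {y \<in> X. part (last_black x) y = part (last_black x) x} else {x})"

lemma finite_black_at: "finite {j. black_at j x}"
  by (rule finite_subset[of _ "{..<length Hs}"]) (auto simp: black_at_def)

lemma black_at_last_black: "has_black x \<Longrightarrow> black_at (last_black x) x"
  unfolding last_black_def has_black_def using finite_black_at Max_in by auto

lemma le_last_black: "black_at j x \<Longrightarrow> j \<le> last_black x"
  unfolding last_black_def using finite_black_at by simp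

lemma black_at_cong: "black_at j x \<Longrightarrow> part j y = part j x \<Longrightarrow> black_at j y"
  unfolding black_at_def by auto

lemma black_at_0:
  assumes "x \<in> X" "y \<in> X" "{x, y} \<in> E"
  shows "black_at 0 x"
  unfolding black_at_def H_0 graph_trigraph_def
  using length_pos simple_graph_edge_distinct[OF simple] assms by (intro conjI bexI[of _ y]) auto

lemma has_black_if_edge: "x \<in> X \<Longrightarrow> y \<in> X \<Longrightarrow> {x, y} \<in> E \<Longrightarrow> has_black x"
  using black_at_0 unfolding has_black_def by blast

text \<open>In the last trigraph all vertices form a single part, so no black edge can occur there.\<close>
lemma black_at_Suc_less:
  assumes "black_at j x" "x \<in> V"
  shows "Suc j < length Hs"
proof (rule ccontr)
  assume "\<not> Suc j < length Hs"
  moreover have "j < length Hs" using assms(1) unfolding black_at_def by blast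
  ultimately have "j = length Hs - 1" by simp
  moreover obtain y where "y \<in> X" "part j y \<noteq> part j x"
    using assms(1) unfolding black_at_def by blast
  ultimately show False using part_last_eq assms(2) X_subset by blast
qed

lemma mem_bag: "x \<in> X \<Longrightarrow> x \<in> bag x"
  unfolding bag_def by auto

lemma bag_subset: "x \<in> X \<Longrightarrow> bag x \<subseteq> X"
  unfolding bag_def by auto

lemma part_eq_if_mem_bag:
  "has_black x \<Longrightarrow> y \<in> bag x \<Longrightarrow> y \<in> X \<and> part (last_black x) y = part (last_black x) x"
  unfolding bag_def by simp

lemma bag_eq_if_mem_bag:
  assumes x: "x \<in> X" and y: "y \<in> bag x"
  shows "bag y = bag x" "last_black y = last_black x"
proof -
  have "bag y = bag x \<and> last_black y = last_black x"
  proof (cases "has_black x")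
    case True
    then have yX: "y \<in> X" and part_y: "part (last_black x) y = part (last_black x) x"
      using part_eq_if_mem_bag y by auto
    have "black_at (last_black x) y"
      using black_at_cong[OF black_at_last_black[OF True] part_y] .
    then have hy: "has_black y" and le: "last_black x \<le> last_black y"
      unfolding has_black_def using le_last_black by auto
    have "part (last_black y) y = part (last_black y) x"
      using part_eq_mono[OF part_y le] .
    then have "black_at (last_black y) x"
      using black_at_cong[OF black_at_last_black[OF hy]] by simp
    then have "last_black y = last_black x"
      using le le_last_black by (simp add: antisym)
    then show ?thesis
      unfolding bag_def using True hy part_y by auto
  next
    case False
    then show ?thesis using y unfolding bag_def by simp
  qed
  then show "bag y = bag x" "last_black y = last_black x" by auto
qed

lemma last_black_eq_if_bag_eq:
  "x \<in> X \<Longrightarrow> y \<in> X \<Longrightarrow> bag x = bag y \<Longrightarrow> last_black x = last_black y"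
  using bag_eq_if_mem_bag(2) mem_bag by metis

lemma bag_eq_if_part_eq:
  assumes "x \<in> X" "y \<in> X" "has_black x" "j \<le> last_black x" "part j y = part j x"
  shows "bag y = bag x"
proof -
  have "y \<in> bag x"
    using part_eq_mono[OF assms(5,4)] assms(2,3) unfolding bag_def by simp
  then show ?thesis using bag_eq_if_mem_bag(1) assms(1) by blast
qed

text \<open>Every vertex of a bag is adjacent to the vertex w realising the last black edge, so a
  clique in the bag extends by w.\<close>
lemma bag_clique_free:
  assumes x: "x \<in> X" and s: "2 \<le> s"
    and clique_free: "\<not> (\<exists>K \<subseteq> X. card K = Suc s \<and> is_clique E K)"
  shows "\<not> (\<exists>K \<subseteq> bag x. card K = s \<and> is_clique E K)"
proof
  assume "\<exists>K \<subseteq> bag x. card K = s \<and> is_clique E K"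
  then obtain K where K: "K \<subseteq> bag x" "card K = s" "is_clique E K" by blast
  then have fin: "finite K" using s by (metis card.infinite not_numeral_le_zero)
  show False
  proof (cases "has_black x")
    case False
    then have "card K \<le> card {x}" using K(1) unfolding bag_def by (intro card_mono) auto
    then show False using K(2) s by simp
  next
    case True
    let ?j = "last_black x"
    obtain w where w: "w \<in> X" "part ?j w \<noteq> part ?j x" "{part ?j x, part ?j w} \<in> blk (H ?j)"
      using black_at_last_black[OF True] unfolding black_at_def by blast
    have "?j < length Hs" using black_at_last_black[OF True] unfolding black_at_def by simp
    have w_adj: "{y, w} \<in> E" if "y \<in> K" for y
    proof -
      have "y \<in> X" "part ?j y = part ?j x"
        using part_eq_if_mem_bag[OF True] K(1) that by auto
      then show ?thesis
        using edge_if_blk_parts[of ?j y w] \<open>?j < length Hs\<close> w X_subset by auto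
    qed
    have "w \<notin> K" using K(1) w(2) part_eq_if_mem_bag[OF True] by blast
    then have "card (insert w K) = Suc s" using fin K(2) by simp
    moreover have "insert w K \<subseteq> X" using K(1) bag_subset[OF x] w(1) by blast
    moreover have "is_clique E (insert w K)"
      using K(3) w_adj unfolding is_clique_def by (auto simp: insert_commute)
    ultimately show False using clique_free by blast
  qed
qed

definition bags_adjacent :: "'a set \<Rightarrow> 'a set \<Rightarrow> bool" where
  "bags_adjacent A B \<longleftrightarrow> A \<noteq> B \<and> (\<exists>a\<in>A. \<exists>b\<in>B. {a, b} \<in> E)"

lemma bags_adjacent_sym: "bags_adjacent A B \<Longrightarrow> bags_adjacent B A"
  unfolding bags_adjacent_def by (metis insert_commute)

lemma not_bags_adjacent_self: "\<not> bags_adjacent A A"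
  unfolding bags_adjacent_def by simp

definition bag_rank :: "'a set \<Rightarrow> nat" where
  "bag_rank B = last_black (SOME y. y \<in> X \<and> B = bag y)"

lemma bag_rank_bag: "x \<in> X \<Longrightarrow> bag_rank (bag x) = last_black x"
  unfolding bag_rank_def
  by (rule someI2[of _ x]) (auto intro: last_black_eq_if_bag_eq)

text \<open>A black edge at time \<open>Suc j\<close> would be a later black edge of x.\<close>
lemma part_Suc_of_neighbour:
  assumes x: "x \<in> X" "has_black x" and y: "y \<in> X" "y \<notin> bag x" and xy: "{x, y} \<in> E"
  defines "j \<equiv> last_black x"
  shows "part j y \<noteq> part j x"
    and "part (Suc j) y \<in> red_neighbours (Suc j) (part (Suc j) x) \<union> {part (Suc j) x}"
proof -
  have Suc_j: "Suc j < length Hs"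
    using black_at_Suc_less black_at_last_black x X_subset unfolding j_def by blast
  show "part j y \<noteq> part j x"
    using y x(2) unfolding bag_def j_def by auto
  show "part (Suc j) y \<in> red_neighbours (Suc j) (part (Suc j) x) \<union> {part (Suc j) x}"
  proof (cases "part (Suc j) y = part (Suc j) x")
    case False
    have "{part (Suc j) x, part (Suc j) y} \<notin> blk (H (Suc j))"
    proof
      assume "{part (Suc j) x, part (Suc j) y} \<in> blk (H (Suc j))"
      then have "black_at (Suc j) x"
        unfolding black_at_def using Suc_j y(1) False by auto
      then show False using le_last_black unfolding j_def by fastforce
    qed
    moreover have "tadj (H (Suc j)) (part (Suc j) x) (part (Suc j) y)"
      using tadj_parts_if_edge[OF Suc_j, of x y] x y xy False X_subset by auto
    ultimately show ?thesis
      using part_in_tverts[OF _ Suc_j] y(1) X_subset False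
      unfolding tadj_def red_neighbours_def by auto
  qed simp
qed

lemma later_adjacent_bag_witness:
  assumes x: "x \<in> X" "has_black x" and B: "B \<in> bag ` X" "bags_adjacent (bag x) B"
  defines "j \<equiv> last_black x"
  obtains y where "y \<in> X" "bag y = B" "has_black y"
    "part j y \<in> {a \<in> tverts (H j). a \<noteq> part j x \<and>
        merge j a \<in> red_neighbours (Suc j) (part (Suc j) x) \<union> {part (Suc j) x}}"
proof -
  obtain x' y where x': "x' \<in> bag x" and y: "y \<in> B" and xy: "{x', y} \<in> E"
    and ne: "bag x \<noteq> B"
    using B(2) unfolding bags_adjacent_def by blast
  have yX: "y \<in> X" and bag_y: "bag y = B"
    using B(1) y bag_subset bag_eq_if_mem_bag(1) by blast+
  have x'X: "x' \<in> X" and part_x': "part j x' = part j x"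
    using part_eq_if_mem_bag[OF x(2) x'] unfolding j_def by auto
  have j': "last_black x' = j" and bag_x': "bag x' = bag x"
    using bag_eq_if_mem_bag[OF x(1) x'] unfolding j_def by auto
  have "y \<notin> bag x'" using bag_eq_if_mem_bag(1)[OF x'X] bag_y bag_x' ne by metis
  from part_Suc_of_neighbour[OF x'X has_black_if_edge[OF x'X yX xy] yX this xy]
  have "part j y \<noteq> part j x"
    and "merge j (part j y) \<in> red_neighbours (Suc j) (part (Suc j) x) \<union> {part (Suc j) x}"
    using j' part_x' by auto
  moreover have "part j y \<in> tverts (H j)"
    using part_in_tverts yX X_subset black_at_last_black[OF x(2)]
    unfolding black_at_def j_def by auto
  moreover have "has_black y"
    using has_black_if_edge[OF yX x'X] xy by (simp add: insert_commute)
  ultimately show ?thesis using that yX bag_y by blast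
qed

lemma not_bags_adjacent_if_not_has_black:
  assumes "x \<in> X" "\<not> has_black x" "B \<in> bag ` X"
  shows "\<not> bags_adjacent (bag x) B"
proof
  assume "bags_adjacent (bag x) B"
  then obtain a b where "a \<in> bag x" "b \<in> B" "{a, b} \<in> E"
    unfolding bags_adjacent_def by blast
  moreover have "bag x = {x}" using assms(2) unfolding bag_def by simp
  ultimately have "b \<in> X" "{x, b} \<in> E" using assms(3) bag_subset by auto
  then show False using assms(1,2) has_black_if_edge by blast
qed

lemma card_later_adjacent_bags:
  assumes "A \<in> bag ` X"
  shows "card {B \<in> bag ` X. bags_adjacent A B \<and> bag_rank A \<le> bag_rank B} \<le> d + 1"
    (is "card ?S \<le> _")
proof -
  obtain x where x: "x \<in> X" "A = bag x" using assms by blast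
  show ?thesis
  proof (cases "has_black x")
    case False
    then have "?S = {}" using not_bags_adjacent_if_not_has_black x by blast
    then show ?thesis by (metis card.empty zero_le)
  next
    case True
    define j where "j = last_black x"
    let ?p = "part (Suc j) x"
    let ?P = "{a \<in> tverts (H j). a \<noteq> part j x \<and> merge j a \<in> red_neighbours (Suc j) ?p \<union> {?p}}"
    have Suc_j: "Suc j < length Hs"
      using black_at_Suc_less black_at_last_black True x X_subset unfolding j_def by blast
    have "\<forall>B\<in>?S. \<exists>y. y \<in> X \<and> bag y = B \<and> has_black y \<and> part j y \<in> ?P"
    proof
      fix B assume "B \<in> ?S"
      then show "\<exists>y. y \<in> X \<and> bag y = B \<and> has_black y \<and> part j y \<in> ?P"
        using later_adjacent_bag_witness[OF x(1) True, of B] x(2) unfolding j_def by blast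
    qed
    from bchoice[OF this] obtain wit where wit: "\<And>B. B \<in> ?S \<Longrightarrow>
        wit B \<in> X \<and> bag (wit B) = B \<and> has_black (wit B) \<and> part j (wit B) \<in> ?P"
      by blast
    text \<open>A later bag is recovered from the part of its witness at time j.\<close>
    have "inj_on (\<lambda>B. part j (wit B)) ?S"
    proof (rule inj_onI)
      fix B1 B2 assume B: "B1 \<in> ?S" "B2 \<in> ?S" and eq: "part j (wit B1) = part j (wit B2)"
      have w1: "wit B1 \<in> X" "bag (wit B1) = B1" "has_black (wit B1)"
        and w2: "wit B2 \<in> X" "bag (wit B2) = B2"
        using wit[OF B(1)] wit[OF B(2)] by auto
      have "j = bag_rank A" using bag_rank_bag x unfolding j_def by simp
      also have "\<dots> \<le> bag_rank B1" using B(1) by simp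
      also have "\<dots> = last_black (wit B1)" using bag_rank_bag[OF w1(1)] w1(2) by simp
      finally have "bag (wit B2) = bag (wit B1)"
        using bag_eq_if_part_eq[OF w1(1) w2(1) w1(3)] eq by simp
      then show "B1 = B2" using w1(2) w2(2) by simp
    qed
    then have "card ?S \<le> card ?P"
      using wit finite_subset[of ?P "tverts (H j)"] wf_H Suc_j unfolding wf_trigraph_def
      by (intro card_inj_on_le) auto
    also have "\<dots> \<le> d + 1"
      using card_preimage_red_neighbours[OF Suc_j part_in_tverts] x(1) X_subset Suc_j by auto
    finally show ?thesis .
  qed
qed

lemma proper_coloring_of_bags:
  assumes "\<forall>x\<in>X. \<exists>c. proper_coloring (bag x) E k c"
  shows "\<exists>c. proper_coloring X E ((d + 2) * k) c"
proof -
  have "\<forall>B\<in>bag ` X. \<exists>c. proper_coloring B E k c" using assms by blast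
  from bchoice[OF this] obtain f where "\<forall>B\<in>bag ` X. proper_coloring B E k (f B)"
    by blast
  then have f: "\<And>x. x \<in> X \<Longrightarrow> proper_coloring (bag x) E k (f (bag x))" by blast
  have "finite (bag ` X)"
    using simple X_subset finite_subset unfolding simple_graph_def by blast
  then obtain g where g: "\<forall>A\<in>bag ` X. g A \<le> d + 1"
    "\<forall>A\<in>bag ` X. \<forall>B\<in>bag ` X. bags_adjacent A B \<longrightarrow> g A \<noteq> g B"
    by (rule greedy_coloring_by_rank[where adj = bags_adjacent and r = bag_rank and k = "d + 1"])
      (use bags_adjacent_sym not_bags_adjacent_self card_later_adjacent_bags in blast)+
  have "proper_coloring X E ((d + 2) * k) (\<lambda>x. g (bag x) * k + f (bag x) x)"
  proof (rule proper_coloring_by_classes[OF mem_bag f])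
    show "g (bag x) < d + 2" if "x \<in> X" for x using g(1) that by (simp add: less_Suc_eq_le)
    show "g (bag x) \<noteq> g (bag y)" if "x \<in> X" "y \<in> X" "bag x \<noteq> bag y" "{x, y} \<in> E" for x y
      using g(2) that mem_bag unfolding bags_adjacent_def by blast
  qed
  then show ?thesis by blast
qed

end

context contraction_sequence
begin

lemma proper_coloring_if_clique_free:
  assumes "2 \<le> s" "X \<subseteq> V" "\<not> (\<exists>K \<subseteq> X. card K = s \<and> is_clique E K)"
  shows "\<exists>c. proper_coloring X E ((d + 2) ^ (s - 2)) c"
  using assms
proof (induction s arbitrary: X rule: nat_induct_at_least)
  case base
  have "{x, y} \<notin> E" if "x \<in> X" "y \<in> X" "x \<noteq> y" for x y
  proof
    assume "{x, y} \<in> E"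
    then have "is_clique E {x, y}" unfolding is_clique_def by (auto simp: insert_commute)
    then show False using base.prems(2) that by auto
  qed
  then have "proper_coloring X E 1 (\<lambda>_. 0)" unfolding proper_coloring_def by auto
  then show ?case by auto
next
  case (Suc s)
  interpret contraction_sequence_subset V E d Hs X
    using Suc.prems(1) by unfold_locales
  have "\<forall>x\<in>X. \<exists>c. proper_coloring (bag x) E ((d + 2) ^ (s - 2)) c"
    using Suc.IH bag_subset Suc.prems bag_clique_free Suc.hyps by (meson order_trans)
  moreover have "(d + 2) * (d + 2) ^ (s - 2) = (d + 2) ^ (Suc s - 2)"
    using Suc.hyps by (metis Suc_diff_le diff_Suc_Suc power_Suc)
  ultimately show ?case using proper_coloring_of_bags by metis
qed

end

lemma contraction_sequence_to_single_vertex: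
  assumes "finite (tverts H)" "card (tverts H) = Suc m"
  shows "\<exists>Hs. length Hs = Suc m \<and> hd Hs = H \<and> card (tverts (last Hs)) = 1
      \<and> (\<forall>H'\<in>set Hs. tverts H' \<subseteq> tverts H)
      \<and> (\<forall>i. Suc i < length Hs \<longrightarrow> contraction_step (Hs ! i) (Hs ! Suc i))"
  using assms
proof (induction m arbitrary: H)
  case 0
  then show ?case by (intro exI[of _ "[H]"]) auto
next
  case (Suc m)
  have "\<not> (\<forall>a\<in>tverts H. \<forall>b\<in>tverts H. a = b)"
    using Suc.prems card_le_Suc0_iff_eq[of "tverts H"] by simp
  then obtain u v where uv: "u \<in> tverts H" "v \<in> tverts H" "u \<noteq> v" by blast
  let ?H' = "contract H u v u"
  have tverts': "tverts ?H' = tverts H - {v}" using uv by (auto simp: contract_simps)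
  then obtain Hs where Hs: "length Hs = Suc m" "hd Hs = ?H'" "card (tverts (last Hs)) = 1"
      "\<forall>H''\<in>set Hs. tverts H'' \<subseteq> tverts ?H'"
      "\<forall>i. Suc i < length Hs \<longrightarrow> contraction_step (Hs ! i) (Hs ! Suc i)"
    using Suc.IH[of ?H'] Suc.prems uv by auto
  have "contraction_step H (Hs ! 0)"
    using uv Hs(1,2) unfolding contraction_step_iff admissible_contraction_def
    by (cases Hs) auto
  then have "contraction_step ((H # Hs) ! i) ((H # Hs) ! Suc i)" if "Suc i < length (H # Hs)" for i
    using Hs(1,5) that by (cases i) auto
  then show ?case
    using Hs tverts' by (intro exI[of _ "H # Hs"]) auto
qed

lemma d_sequence_card:
  assumes "simple_graph V E" "V \<noteq> {}"
  shows "\<exists>Hs. d_sequence V E (card V) Hs"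
proof -
  have fin: "finite V" using assms(1) unfolding simple_graph_def by blast
  then obtain m where m: "card V = Suc m" using assms(2) by (metis card_gt_0_iff gr0_conv_Suc)
  obtain Hs where Hs: "length Hs = Suc m" "hd Hs = graph_trigraph V E"
      "card (tverts (last Hs)) = 1" "\<forall>H\<in>set Hs. tverts H \<subseteq> V"
      "\<forall>i. Suc i < length Hs \<longrightarrow> contraction_step (Hs ! i) (Hs ! Suc i)"
    using contraction_sequence_to_single_vertex[of "graph_trigraph V E" m] fin m
    by (auto simp: graph_trigraph_def)
  have "d_trigraph (card V) H" if "H \<in> set Hs" for H
    unfolding d_trigraph_def using Hs(4) that fin by (auto intro: card_mono)
  then show ?thesis unfolding d_sequence_def using Hs m by (intro exI[of _ Hs]) auto
qed

lemma d_sequence_mono: "d_sequence V E d Hs \<Longrightarrow> d \<le> d' \<Longrightarrow> d_sequence V E d' Hs"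
  unfolding d_sequence_def d_trigraph_def by (meson order_trans)

lemma d_sequence_twin_width:
  assumes "simple_graph V E" "V \<noteq> {}" "twin_width V E \<le> d"
  shows "\<exists>Hs. d_sequence V E d Hs"
proof -
  have "\<exists>Hs. d_sequence V E (twin_width V E) Hs"
    unfolding twin_width_def by (rule LeastI_ex) (use d_sequence_card[OF assms(1,2)] in blast)
  then show ?thesis using d_sequence_mono assms(3) by blast
qed

theorem mainTheorem10:
  fixes V :: "'a set" and E :: "'a set set" and t d :: nat
  assumes "simple_graph V E"
    and "t \<ge> 3"
    and "twin_width V E \<le> d"
    and "\<not> (\<exists>K \<subseteq> V. card K = t \<and> is_clique E K)"
  shows "\<exists>c. proper_coloring V E ((d + 2) ^ (t - 2)) c"
proof (cases "V = {}")
  text \<open>An empty graph has no d-sequence, so its \<open>twin_width\<close> is a junk value.\<close>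
  case True
  then show ?thesis unfolding proper_coloring_def by auto
next
  case False
  then obtain Hs where "d_sequence V E d Hs"
    using d_sequence_twin_width assms(1,3) by blast
  then interpret contraction_sequence V E d Hs
    using assms(1) by unfold_locales
  show ?thesis using proper_coloring_if_clique_free assms(2,4) by simp
qed

end
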